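(* Let $(\mathcal{M},d)$, $P$, $x^*$, $X_1,\dots,X_n$ be as in the context, with $\eta=d^\alpha$ for some $1<\alpha\le2$. Assume (A2) holds with the growth function $l(y,z)=\alpha2^{-\alpha+1}d(y,z)^{\alpha-1}$, exponent $\beta=2-2/\alpha$ and some $K>0$, and assume (B1') holds with constants $A_1,D_1>0$. Then for every $\delta>0$, $n\in\mathbb{N}$ and $0<\tau\le1$, $$ N\left(\tau\|H_{\delta,\eta}\|_{2,P_n},\mathcal{F}_\eta(\delta),\|\cdot\|_{2,P_n}\right)\le\left(\frac{A_1}{\tau^{1/(\alpha-1)}}\right)^{D_1}, $$ i.e. (B1) holds with $A=A_1^{\alpha-1}$ and $D=D_1/(\alpha-1)$. In particular, for $\eta=d^2$ (where (A2) holds with $l=d$, $K=\beta=1$), (B1') alone implies (B1) with $A=A_1$, $D=D_1$.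
   Context: $(\mathcal{M},d)$ is an NPC space: a Polish space such that for any $x_0,x_1$ there is $y$ with $d(z,y)^2\le\frac12d(z,x_0)^2+\frac12d(z,x_1)^2-\frac14d(x_0,x_1)^2$ for all $z$. $P$ is a Borel probability measure with finite second moment, $x^*\in\arg\min_x\int\eta(x,y)dP(y)$ (assumed to exist), $X_1,\dots,X_n$ i.i.d. with law $P$, $P_n$ the empirical measure, $\|f\|_{2,P_n}^2=\frac1n\sum_if(X_i)^2$. (A2): $l(x,x^* )^2\le K\left(\int(\eta(x,y)-\eta(x^*,y))dP(y)\right)^\beta$ for all $x$. Notation: $\eta_c(x,\cdot)=\eta(x,\cdot)-\int\eta(x,y)dP(y)$, $f_\eta(x,\cdot)=\eta_c(x,\cdot)-\eta_c(x^*,\cdot)$, $\mathcal{M}_\eta(\delta)=\{x:\int(\eta(x,y)-\eta(x^*,y))dP(y)\le\delta\}$, $\mathcal{F}_\eta(\delta)=\{f_\eta(x,\cdot):x\in\mathcal{M}_\eta(\delta)\}$, $H_{\delta,\eta}(y)=2\sqrt{K\delta^\beta}\int d(y,z)dP(z)$. $N(\tau,\mathcal{S},\rho)$ is the minimal number of $\rho$-balls of radius $\tau$ covering $\mathcal{S}$, and $B(x,r)$ the closed metric ball. (B1'): there are $A_1,D_1>0$ such that for every $r>0$ and $\tau\in(0,r]$, $N(\tau,B(x^*,r),d)\le(A_1r/\tau)^{D_1}$. (B1): there are $A,D>0$ with $N(\tau\|H_{\delta,\eta}\|_{2,P_n},\mathcal{F}_\eta(\delta),\|\cdot\|_{2,P_n})\le(A/\tau)^D$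 for all $\delta>0$, $n$, $0<\tau\le1$. *)

theory Defs
  imports "HOL-Probability.Probability"
begin

definition NPC_space :: "'a::metric_space itself \<Rightarrow> bool" where
  "NPC_space _ \<longleftrightarrow> (\<forall>x0 x1::'a. \<exists>y. \<forall>z.
      dist z y ^ 2 \<le> dist z x0 ^ 2 / 2 + dist z x1 ^ 2 / 2 - dist x0 x1 ^ 2 / 4)"

text \<open>Covering number: minimal number of closed \<open>\<rho>\<close>-balls of radius \<open>\<tau>\<close>
  (centres anywhere in the ambient type) covering \<open>S\<close>; \<open>\<infinity>\<close> if no finite cover.\<close>
definition covering_number :: "real \<Rightarrow> 'b set \<Rightarrow> ('b \<Rightarrow> 'b \<Rightarrow> real) \<Rightarrow> ereal" where
  "covering_number \<tau> S \<rho> =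
     Inf ((\<lambda>C. ereal (real (card C))) ` {C. finite C \<and> S \<subseteq> (\<Union>c\<in>C. {x. \<rho> c x \<le> \<tau>})})"

definition emp_norm :: "nat \<Rightarrow> (nat \<Rightarrow> 'a) \<Rightarrow> ('a \<Rightarrow> real) \<Rightarrow> real" where
  "emp_norm n x f = sqrt ((1 / real n) * (\<Sum>i=1..n. (f (x i))\<^sup>2))"

definition emp_dist :: "nat \<Rightarrow> (nat \<Rightarrow> 'a) \<Rightarrow> ('a \<Rightarrow> real) \<Rightarrow> ('a \<Rightarrow> real) \<Rightarrow> real" where
  "emp_dist n x f g = emp_norm n x (\<lambda>y. f y - g y)"

definition eta_c :: "'a measure \<Rightarrow> ('a \<Rightarrow> 'a \<Rightarrow> real) \<Rightarrow> 'a \<Rightarrow> 'a \<Rightarrow> real" where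
  "eta_c P \<eta> x y = \<eta> x y - (LINT z|P. \<eta> x z)"

definition f_eta :: "'a measure \<Rightarrow> ('a \<Rightarrow> 'a \<Rightarrow> real) \<Rightarrow> 'a \<Rightarrow> 'a \<Rightarrow> 'a \<Rightarrow> real" where
  "f_eta P \<eta> xs x y = eta_c P \<eta> x y - eta_c P \<eta> xs y"

definition M_eta :: "'a measure \<Rightarrow> ('a \<Rightarrow> 'a \<Rightarrow> real) \<Rightarrow> 'a \<Rightarrow> real \<Rightarrow> 'a set" where
  "M_eta P \<eta> xs \<delta> = {x. (LINT y|P. \<eta> x y - \<eta> xs y) \<le> \<delta>}"

definition F_eta :: "'a measure \<Rightarrow> ('a \<Rightarrow> 'a \<Rightarrow> real) \<Rightarrow> 'a \<Rightarrow> real \<Rightarrow> ('a \<Rightarrow> real) set" where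
  "F_eta P \<eta> xs \<delta> = f_eta P \<eta> xs ` M_eta P \<eta> xs \<delta>"

definition H_eta :: "'a::metric_space measure \<Rightarrow> real \<Rightarrow> real \<Rightarrow> real \<Rightarrow> 'a \<Rightarrow> real" where
  "H_eta P K \<beta> \<delta> y = 2 * sqrt (K * \<delta> powr \<beta>) * (LINT z|P. dist y z)"

end

theory Submission
  imports Defs
begin

(* In an NPC space the squared metric satisfies Sturm's quadruple inequality
   d(x,y)^2 - d(c,y)^2 - d(x,z)^2 + d(c,z)^2 <= 2 d(x,c) d(y,z): subdivide x c and y z into
   chains of midpoints and sum the elementary NPC inequality over all pairs of steps.
   Applied to short steps of a subdivision of y z, a convexity estimate for t \<mapsto> t^\<alpha> turns this
   into the quadruple inequality for d^\<alpha> with constant \<alpha> 2^(2-\<alpha>) d(x,c)^(\<alpha>-1) d(y,z).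
   Integrating in z, x \<mapsto> f_\<eta>(x,.) is (\<alpha>-1)-Hoelder with envelope H_{\<delta>,\<eta>}, and (A2) puts
   M_\<eta>(\<delta>) in a ball of radius R around x*.  Every cover of that ball by balls of radius
   R \<tau>^(1/(\<alpha>-1)) is thus mapped onto a cover of F_\<eta>(\<delta>) of radius \<tau> ||H||, and (B1') bounds
   its size. *)

lemma concave_powr_le_tangent:
  fixes g b c :: real
  assumes g: "0 < g" "g \<le> 1" and "0 \<le> b" "0 < c"
  shows "b powr g \<le> c powr g + g * c powr (g - 1) * (b - c)"
proof -
  have young: "b powr g * c powr (1 - g) \<le> g * b + (1 - g) * c"
  proof (cases "b = 0")
    case False
    then show ?thesis using Youngs_inequality_0[of g "1 - g" b c] assms by simp
  qed (use assms in simp)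
  have c_powr: "c * c powr (g - 1) = c powr g"
    using \<open>0 < c\<close> powr_add[of c 1 "g - 1"] by simp
  have "b powr g = b powr g * c powr (1 - g) * c powr (g - 1)"
    using \<open>0 < c\<close> by (simp add: mult.assoc flip: powr_add)
  also have "\<dots> \<le> (g * b + (1 - g) * c) * c powr (g - 1)"
    using young by (rule mult_right_mono) simp
  also have "\<dots> = c powr g + g * c powr (g - 1) * (b - c)"
    using c_powr by (simp add: algebra_simps)
  finally show ?thesis .
qed

lemma convex_powr_tangent_le:
  fixes g x y :: real
  assumes g: "0 < g" "g \<le> 1" and "0 \<le> x" "0 \<le> y"
  shows "x powr (1 + g) + (1 + g) * x powr g * (y - x) \<le> y powr (1 + g)"
proof (cases "x = 0 \<or> y = 0")
  case True
  moreover have "x powr (1 + g) = x * x powr g"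
    using assms powr_add[of x 1 g] by (cases "x = 0") auto
  ultimately show ?thesis using assms by (auto simp: algebra_simps)
next
  case False
  then have x: "x > 0" and y: "y > 0" using assms by auto
  have "y * x powr g
        = (y powr (1 + g)) powr (1 / (1 + g)) * (x powr (1 + g)) powr (g / (1 + g))"
    using g x y by (simp add: powr_powr)
  also have "\<dots> \<le> (1 / (1 + g)) * y powr (1 + g) + (g / (1 + g)) * x powr (1 + g)"
    using g x y by (intro Youngs_inequality_0) (auto simp: field_simps)
  also have "\<dots> = (y powr (1 + g) + g * x powr (1 + g)) / (1 + g)"
    by (simp add: add_divide_distrib)
  finally have "(y * x powr g) * (1 + g) \<le> y powr (1 + g) + g * x powr (1 + g)"
    using g by (simp add: pos_le_divide_eq)
  moreover have "x powr (1 + g) = x * x powr g" using x powr_add[of x 1 g] by simp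
  ultimately show ?thesis by (simp add: algebra_simps)
qed

lemma powr_add_le_add_powr:
  fixes g x y :: real
  assumes g: "0 < g" "g \<le> 1" and "0 \<le> x" "0 \<le> y"
  shows "(x + y) powr g \<le> x powr g + y powr g"
proof (cases "x + y = 0")
  case False
  then have s: "x + y > 0" using assms by simp
  have part: "u * (x + y) powr (g - 1) \<le> u powr g" if "0 \<le> u" "u \<le> x + y" for u
  proof (cases "u = 0")
    case False
    then have "u > 0" using that by simp
    then have "u * (x + y) powr (g - 1) \<le> u * u powr (g - 1)"
      using powr_mono2'[of "g - 1" u "x + y"] g that by simp
    also have "\<dots> = u powr g" using \<open>u > 0\<close> powr_add[of u 1 "g - 1"] by simp
    finally show ?thesis .
  qed (use g in simp)
  have "(x + y) powr g = x * (x + y) powr (g - 1) + y * (x + y) powr (g - 1)"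
    using s powr_add[of "x + y" 1 "g - 1"] by (simp add: algebra_simps)
  also have "\<dots> \<le> x powr g + y powr g"
    using part[of x] part[of y] assms by (intro add_mono) auto
  finally show ?thesis .
qed (use assms in simp)

lemma abs_powr_diff_le:
  fixes g x y :: real
  assumes g: "0 < g" "g \<le> 1" and "0 \<le> x" "0 \<le> y"
  shows "\<bar>x powr g - y powr g\<bar> \<le> \<bar>x - y\<bar> powr g"
proof -
  have ordered: "\<bar>u powr g - v powr g\<bar> \<le> \<bar>u - v\<bar> powr g" if "0 \<le> v" "v \<le> u" for u v
  proof -
    have "u powr g - v powr g \<le> (u - v) powr g"
      using powr_add_le_add_powr[of g v "u - v"] g that by simp
    moreover have "v powr g \<le> u powr g" using g that by (intro powr_mono2) auto
    ultimately show ?thesis using that by simp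
  qed
  show ?thesis
    using ordered[of y x] ordered[of x y] assms by (cases "y \<le> x") (auto simp: abs_minus_commute)
qed

lemma powr_add_powr_le:
  fixes g x y :: real
  assumes g: "0 < g" "g \<le> 1" and "0 \<le> x" "0 \<le> y"
  shows "x powr g + y powr g \<le> 2 powr (1 - g) * (x + y) powr g"
proof (cases "x + y = 0")
  case False
  define c where "c = (x + y) / 2"
  have c: "c > 0" using False assms c_def by simp
  have "x powr g + y powr g \<le> 2 * c powr g + g * c powr (g - 1) * (x + y - 2 * c)"
    using concave_powr_le_tangent[OF g _ c, of x] concave_powr_le_tangent[OF g _ c, of y] assms
    by (simp add: algebra_simps)
  also have "\<dots> = 2 * ((x + y) powr g / 2 powr g)"
    unfolding c_def by (simp add: powr_divide)
  also have "\<dots> = 2 powr (1 - g) * (x + y) powr g" by (simp add: powr_diff)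
  finally show ?thesis .
qed (use assms in \<open>simp add: add_nonneg_eq_0_iff\<close>)

lemma two_minus_le_four_powr:
  fixes g :: real
  assumes "g \<le> 1"
  shows "2 - g \<le> 4 powr (1 - g)"
proof -
  have "1 \<le> ln (4::real)" using ln_ge_iff[of 4 1] exp_le by simp
  then have "2 - g \<le> 1 + (1 - g) * ln 4"
    using mult_left_mono[of 1 "ln 4" "1 - g"] assms by simp
  also have "\<dots> \<le> exp ((1 - g) * ln 4)" by (rule exp_ge_add_one_self)
  finally show ?thesis by (simp add: powr_def)
qed

lemma tangent_weight_le_far:
  fixes g a b t :: real
  assumes g: "0 < g" "g \<le> 1" and t: "0 < t" "t < b" and ab: "b \<le> a" "a \<le> b + t"
  shows "a powr (g - 1) * (t - b) + b powr g \<le> 2 powr (1 - g) * t powr g"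
proof -
  have bt: "b + t > 0" using t by simp
  have "(b + t) powr (g - 1) * (b - t) \<le> a powr (g - 1) * (b - t)"
    using powr_mono2'[of "g - 1" a "b + t"] g t ab by (intro mult_right_mono) auto
  moreover have "b powr g \<le> (b + t) powr g - g * (b + t) powr (g - 1) * t"
    using concave_powr_le_tangent[OF g _ bt, of b] t by (simp add: algebra_simps)
  moreover have "(b + t) powr g = (b + t) powr (g - 1) * (b + t)"
    using bt powr_add[of "b + t" "g - 1" 1] by simp
  ultimately have "a powr (g - 1) * (t - b) + b powr g \<le> (b + t) powr (g - 1) * ((2 - g) * t)"
    by (simp add: algebra_simps)
  also have "\<dots> \<le> (2 * t) powr (g - 1) * ((2 - g) * t)"
    using powr_mono2'[of "g - 1" "2 * t" "b + t"] g t by (intro mult_right_mono) auto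
  also have "\<dots> = (2 - g) * 2 powr (g - 1) * t powr g"
    using t powr_add[of t "g - 1" 1] by (simp add: powr_mult algebra_simps)
  also have "\<dots> \<le> 2 powr (1 - g) * t powr g"
  proof (intro mult_right_mono)
    have "(2 - g) * 2 powr (g - 1) \<le> 4 powr (1 - g) * 2 powr (g - 1)"
      using two_minus_le_four_powr[OF g(2)] by (intro mult_right_mono) auto
    also have "\<dots> = 2 powr (1 - g)"
      using powr_mult[of 2 2 "1 - g"] by (simp add: mult.assoc flip: powr_add)
    finally show "(2 - g) * 2 powr (g - 1) \<le> 2 powr (1 - g)" .
  qed simp
  finally show ?thesis .
qed

lemma tangent_weight_le:
  fixes g a b t :: real
  assumes g: "0 < g" "g \<le> 1" and t: "0 < t" "t < a + b" and ab: "0 \<le> b" "b \<le> a" "a - b \<le> t"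
  shows "a powr (g - 1) * (t - b) + b powr g \<le> 2 powr (1 - g) * t powr g"
proof -
  consider "b < t / 2" | "t / 2 \<le> b" "b \<le> t" | "t < b" by linarith
  then show ?thesis
  proof cases
    case 1
    then have tb: "t - b > 0" using ab by simp
    have "a powr (g - 1) * (t - b) \<le> (t - b) powr (g - 1) * (t - b)"
      using powr_mono2'[of "g - 1" "t - b" a] g tb t ab by (intro mult_right_mono) auto
    also have "\<dots> = (t - b) powr g" using tb powr_add[of "t - b" "g - 1" 1] by simp
    finally have "a powr (g - 1) * (t - b) + b powr g \<le> (t - b) powr g + b powr g" by simp
    also have "\<dots> \<le> 2 powr (1 - g) * t powr g"
      using powr_add_powr_le[OF g, of "t - b" b] tb ab by simp
    finally show ?thesis .
  next
    case 2
    then have b: "b > 0" using t by simp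
    have "a powr (g - 1) * (t - b) + b powr g \<le> b powr (g - 1) * (t - b) + b powr g"
      using powr_mono2'[of "g - 1" b a] g ab b 2 by (simp add: mult_right_mono)
    also have "\<dots> = b powr (g - 1) * t"
      using b powr_add[of b 1 "g - 1"] by (simp add: algebra_simps)
    also have "\<dots> \<le> (t / 2) powr (g - 1) * t"
      using powr_mono2'[of "g - 1" "t / 2" b] g 2 t by (intro mult_right_mono) auto
    also have "\<dots> = 2 powr (1 - g) * t powr g"
      using t powr_add[of t "g - 1" 1] by (simp add: powr_divide powr_diff)
    finally show ?thesis .
  next
    case 3
    then show ?thesis using tangent_weight_le_far[OF g t(1)] ab by simp
  qed
qed

lemma powr_mult_diff_le_ordered:
  fixes g a b p q s t :: real
  assumes g: "0 < g" "g \<le> 1" and ab: "0 \<le> b" "b \<le> a" "a - b \<le> t"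
    and pq: "\<bar>p\<bar> \<le> s" "\<bar>q\<bar> \<le> s" and c: "a * p - b * q \<le> t * s"
  shows "a powr g * p - b powr g * q \<le> 2 powr (1 - g) * t powr g * s"
proof (cases "t = 0")
  case True
  then have "a = b" using ab by simp
  then have "a powr g * (p - q) \<le> 0"
    using c True ab by (cases "a = 0") (auto simp: algebra_simps mult_le_0_iff)
  then show ?thesis using \<open>a = b\<close> True g by (simp add: algebra_simps)
next
  case False
  then have t: "t > 0" using ab by simp
  have s: "0 \<le> s" using pq by simp
  show ?thesis
  proof (cases "a + b \<le> t")
    case True
    have "a powr g * p \<le> a powr g * s" using pq by (intro mult_left_mono) auto
    moreover have "- (b powr g * q) \<le> b powr g * s"
      using pq by (metis abs_le_iff minus_mult_right mult_left_mono powr_ge_zero)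
    ultimately have "a powr g * p - b powr g * q \<le> (a powr g + b powr g) * s"
      by (simp add: algebra_simps)
    also have "\<dots> \<le> 2 powr (1 - g) * (a + b) powr g * s"
      using powr_add_powr_le[OF g, of a b] ab s by (intro mult_right_mono) auto
    also have "\<dots> \<le> 2 powr (1 - g) * t powr g * s"
      using True g ab s by (intro mult_right_mono mult_left_mono powr_mono2) auto
    finally show ?thesis .
  next
    case False
    then have a: "a > 0" using t ab by simp
    have coeff: "a powr (g - 1) * b - b powr g \<le> 0"
    proof (cases "b = 0")
      case False
      then have "a powr (g - 1) * b \<le> b powr (g - 1) * b"
        using powr_mono2'[of "g - 1" b a] g ab by (intro mult_right_mono) auto
      also have "\<dots> = b powr g" using False ab powr_add[of b 1 "g - 1"] by (simp add: mult.commute)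
      finally show ?thesis by simp
    qed simp
    have "a powr g * p - b powr g * q
          = a powr (g - 1) * (a * p - b * q) + (a powr (g - 1) * b - b powr g) * q"
      using a powr_add[of a 1 "g - 1"] by (simp add: algebra_simps)
    also have "\<dots> \<le> a powr (g - 1) * (t * s) + (a powr (g - 1) * b - b powr g) * (- s)"
      using c coeff pq by (intro add_mono mult_left_mono mult_left_mono_neg) auto
    also have "\<dots> = (a powr (g - 1) * (t - b) + b powr g) * s" by (simp add: algebra_simps)
    also have "\<dots> \<le> 2 powr (1 - g) * t powr g * s"
      using tangent_weight_le[OF g t] False ab s by (intro mult_right_mono) auto
    finally show ?thesis .
  qed
qed

lemma powr_mult_diff_le:
  fixes g a b p q s t :: real
  assumes g: "0 < g" "g \<le> 1" and ab: "0 \<le> a" "0 \<le> b" "\<bar>a - b\<bar> \<le> t"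
    and pq: "\<bar>p\<bar> \<le> s" "\<bar>q\<bar> \<le> s" and c: "a * p - b * q \<le> t * s"
  shows "a powr g * p - b powr g * q \<le> 2 powr (1 - g) * t powr g * s"
proof (cases "b \<le> a")
  case True
  then show ?thesis using powr_mult_diff_le_ordered[OF g] assms by simp
next
  case False
  have "b powr g * (- q) - a powr g * (- p) \<le> 2 powr (1 - g) * t powr g * s"
    using powr_mult_diff_le_ordered[OF g, of a b t "-q" s "-p"] assms False
    by (simp add: algebra_simps)
  then show ?thesis by simp
qed

lemma powr_mult_diff_le_of_sq_diff:
  fixes g a b a' b' s t :: real
  assumes g: "0 < g" "g \<le> 1" and nn: "0 \<le> a" "0 \<le> b"
    and close: "\<bar>a - a'\<bar> \<le> s" "\<bar>b - b'\<bar> \<le> s" "\<bar>a - b\<bar> \<le> t"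
    and sq: "a\<^sup>2 - b\<^sup>2 - a'\<^sup>2 + b'\<^sup>2 \<le> 2 * t * s"
  shows "a powr g * (a - a') - b powr g * (b - b') \<le> 2 powr (1 - g) * t powr g * s + 2 * s powr g * s"
proof -
  have s: "0 \<le> s" and t: "0 \<le> t" using close by auto
  have "(a - a')\<^sup>2 \<le> s\<^sup>2" by (metis abs_ge_zero power2_abs power_mono close(1))
  then have "a * (a - a') - b * (b - b') \<le> (t + s / 2) * s"
    using sq zero_le_power2[of "b - b'"] unfolding power2_eq_square by (simp add: algebra_simps)
  then have "a powr g * (a - a') - b powr g * (b - b') \<le> 2 powr (1 - g) * (t + s / 2) powr g * s"
    using powr_mult_diff_le[OF g nn, of "t + s / 2"] close s by simp
  also have "\<dots> \<le> 2 powr (1 - g) * (t powr g + (s / 2) powr g) * s"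
    using powr_add_le_add_powr[OF g t, of "s / 2"] s by (intro mult_right_mono mult_left_mono) auto
  also have "\<dots> \<le> 2 powr (1 - g) * t powr g * s + 2 * s powr g * s"
  proof -
    have "2 powr (1 - g) * (s / 2) powr g \<le> 2 powr 1 * s powr g"
      using g s by (intro mult_mono powr_mono powr_mono2) auto
    then have "2 powr (1 - g) * (s / 2) powr g * s \<le> 2 * s powr g * s"
      using s by (intro mult_right_mono) auto
    then show ?thesis by (simp add: distrib_left distrib_right)
  qed
  finally show ?thesis .
qed

lemma powr_quadruple_step_le:
  fixes g a b a' b' s t :: real
  assumes g: "0 < g" "g \<le> 1" and nn: "0 \<le> a" "0 \<le> b" "0 \<le> a'" "0 \<le> b'"
    and close: "\<bar>a - a'\<bar> \<le> s" "\<bar>b - b'\<bar> \<le> s" "\<bar>a - b\<bar> \<le> t"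
    and sq: "a\<^sup>2 - b\<^sup>2 - a'\<^sup>2 + b'\<^sup>2 \<le> 2 * t * s"
  shows "a powr (1 + g) - b powr (1 + g) - a' powr (1 + g) + b' powr (1 + g)
         \<le> (1 + g) * 2 powr (1 - g) * t powr g * s + 3 * (1 + g) * s powr g * s"
proof -
  have "b' powr g * (b' - b) = b powr g * (b' - b) + (b' powr g - b powr g) * (b' - b)"
    by (simp add: algebra_simps)
  also have "\<dots> \<le> b powr g * (b' - b) + \<bar>b' powr g - b powr g\<bar> * \<bar>b' - b\<bar>"
    using abs_ge_self[of "(b' powr g - b powr g) * (b' - b)"] by (simp add: abs_mult)
  also have "\<dots> \<le> b powr g * (b' - b) + s powr g * s"
  proof -
    have "\<bar>b' powr g - b powr g\<bar> \<le> \<bar>b' - b\<bar> powr g" by (rule abs_powr_diff_le[OF g nn(4,2)])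
    also have "\<dots> \<le> s powr g" using close(2) g by (intro powr_mono2) (auto simp: abs_minus_commute)
    finally have "\<bar>b' powr g - b powr g\<bar> * \<bar>b' - b\<bar> \<le> s powr g * s"
      using close(2) by (intro mult_mono) (auto simp: abs_minus_commute)
    then show ?thesis by simp
  qed
  finally have b_step: "b' powr g * (b' - b) \<le> b powr g * (b' - b) + s powr g * s" .
  have "a powr (1 + g) - b powr (1 + g) - a' powr (1 + g) + b' powr (1 + g)
        \<le> (1 + g) * a powr g * (a - a') + (1 + g) * b' powr g * (b' - b)"
    using convex_powr_tangent_le[OF g nn(1,3)] convex_powr_tangent_le[OF g nn(4,2)]
    by (simp add: algebra_simps)
  also have "\<dots> \<le> (1 + g) * (a powr g * (a - a') - b powr g * (b - b')) + (1 + g) * (s powr g * s)"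
    using mult_left_mono[OF b_step, of "1 + g"] g by (simp add: algebra_simps)
  also have "\<dots> \<le> (1 + g) * (2 powr (1 - g) * t powr g * s + 2 * s powr g * s) + (1 + g) * (s powr g * s)"
    using powr_mult_diff_le_of_sq_diff[OF g nn(1,2) close sq] g
    by (intro add_right_mono mult_left_mono) auto
  also have "\<dots> = (1 + g) * 2 powr (1 - g) * t powr g * s + 3 * (1 + g) * s powr g * s"
    by (simp add: algebra_simps)
  finally show ?thesis .
qed

definition quadruple :: "('a \<Rightarrow> 'a \<Rightarrow> real) \<Rightarrow> 'a \<Rightarrow> 'a \<Rightarrow> 'a \<Rightarrow> 'a \<Rightarrow> real" where
  "quadruple \<eta> x c y z = \<eta> x y - \<eta> c y - \<eta> x z + \<eta> c z"

lemma quadruple_telescope_left: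
  "(\<Sum>i<N. quadruple \<eta> (p i) (p (Suc i)) y z) = quadruple \<eta> (p 0) (p N) y z"
  by (induction N) (simp_all add: quadruple_def)

lemma quadruple_telescope_right:
  "(\<Sum>j<M. quadruple \<eta> x c (q j) (q (Suc j))) = quadruple \<eta> x c (q 0) (q M)"
  by (induction M) (simp_all add: quadruple_def)

lemma quadruple_telescope:
  "(\<Sum>i<N. \<Sum>j<M. quadruple \<eta> (p i) (p (Suc i)) (q j) (q (Suc j))) = quadruple \<eta> (p 0) (p N) (q 0) (q M)"
  by (simp add: quadruple_telescope_left quadruple_telescope_right)

lemma power2_dist_triangle:
  fixes x y z :: "'a::metric_space"
  shows "(dist x y)\<^sup>2 \<le> 2 * (dist x z)\<^sup>2 + 2 * (dist z y)\<^sup>2"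
proof -
  have "(dist x y)\<^sup>2 \<le> (dist x z + dist z y)\<^sup>2" by (intro power_mono dist_triangle) auto
  also have "\<dots> \<le> 2 * (dist x z)\<^sup>2 + 2 * (dist z y)\<^sup>2"
    using sum_squares_ge_zero[of "dist x z - dist z y" 0] by (simp add: power2_eq_square algebra_simps)
  finally show ?thesis .
qed

lemma NPC_midpoint:
  fixes x0 x1 :: "'a::metric_space"
  assumes "NPC_space TYPE('a)"
  obtains m where "\<And>z. dist z m ^ 2 \<le> dist z x0 ^ 2 / 2 + dist z x1 ^ 2 / 2 - dist x0 x1 ^ 2 / 4"
    and "dist x0 m \<le> dist x0 x1 / 2" "dist m x1 \<le> dist x0 x1 / 2"
proof -
  obtain m where m: "\<And>z. dist z m ^ 2 \<le> dist z x0 ^ 2 / 2 + dist z x1 ^ 2 / 2 - dist x0 x1 ^ 2 / 4"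
    using assms unfolding NPC_space_def by blast
  have "dist x0 m ^ 2 \<le> (dist x0 x1 / 2) ^ 2" using m[of x0] by (simp add: power_divide)
  moreover have "dist m x1 ^ 2 \<le> (dist x0 x1 / 2) ^ 2"
    using m[of x1] by (simp add: power_divide dist_commute)
  ultimately show ?thesis using m that by (meson power2_le_imp_le zero_le_divide_iff zero_le_dist zero_le_numeral)
qed

lemma NPC_quadruple_sq_le_sum_sq:
  fixes x c y z :: "'a::metric_space"
  assumes "NPC_space TYPE('a)"
  shows "quadruple (\<lambda>u v. (dist u v)\<^sup>2) x c y z \<le> (dist x c)\<^sup>2 + (dist y z)\<^sup>2"
proof -
  obtain m where m: "\<And>w. dist w m ^ 2 \<le> dist w x ^ 2 / 2 + dist w y ^ 2 / 2 - dist x y ^ 2 / 4"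
    using NPC_midpoint[OF assms, of x y] by blast
  have "(dist c z)\<^sup>2 \<le> 2 * (dist c m)\<^sup>2 + 2 * (dist m z)\<^sup>2" by (rule power2_dist_triangle)
  then show ?thesis using m[of c] m[of z] unfolding quadruple_def by (simp add: dist_commute)
qed

lemma NPC_dyadic_chain:
  fixes x c :: "'a::metric_space"
  assumes npc: "NPC_space TYPE('a)"
  shows "\<exists>p. p 0 = x \<and> p (2 ^ k) = c \<and> (\<forall>j<2 ^ k. dist (p j) (p (Suc j)) \<le> dist x c / 2 ^ k)"
proof (induction k arbitrary: x c)
  case 0
  show ?case by (rule exI[of _ "\<lambda>j. if j = 0 then x else c"]) simp
next
  case (Suc k)
  obtain m where m: "dist x m \<le> dist x c / 2" "dist m c \<le> dist x c / 2"
    using NPC_midpoint[OF npc, of x c] by blast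
  obtain p1 where p1: "p1 0 = x" "p1 (2 ^ k) = m" "\<forall>j<2 ^ k. dist (p1 j) (p1 (Suc j)) \<le> dist x m / 2 ^ k"
    using Suc.IH[of x m] by blast
  obtain p2 where p2: "p2 0 = m" "p2 (2 ^ k) = c" "\<forall>j<2 ^ k. dist (p2 j) (p2 (Suc j)) \<le> dist m c / 2 ^ k"
    using Suc.IH[of m c] by blast
  define p where "p j = (if j \<le> 2 ^ k then p1 j else p2 (j - 2 ^ k))" for j
  have p_high: "p j = p2 (j - 2 ^ k)" if "2 ^ k \<le> j" for j
    using that p1 p2 unfolding p_def by (cases "j = 2 ^ k") auto
  have half: "dist x m / 2 ^ k \<le> dist x c / 2 ^ Suc k" "dist m c / 2 ^ k \<le> dist x c / 2 ^ Suc k"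
    using m by (simp_all add: field_simps)
  have "dist (p j) (p (Suc j)) \<le> dist x c / 2 ^ Suc k" if j: "j < 2 ^ Suc k" for j
  proof (cases "j < 2 ^ k")
    case True
    then have "p j = p1 j" "p (Suc j) = p1 (Suc j)" unfolding p_def by auto
    then show ?thesis using order_trans[OF p1(3)[rule_format, OF True] half(1)] by simp
  next
    case False
    then have "p j = p2 (j - 2 ^ k)" "p (Suc j) = p2 (Suc (j - 2 ^ k))"
      using p_high[of j] p_high[of "Suc j"] by (auto simp: Suc_diff_le)
    moreover have "j - 2 ^ k < 2 ^ k" using j False by simp
    ultimately show ?thesis using order_trans[OF p2(3)[rule_format] half(2)] by simp
  qed
  moreover have "p 0 = x" "p (2 ^ Suc k) = c" using p1 p2 p_high[of "2 ^ Suc k"] by (simp_all add: p_def)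
  ultimately show ?case by blast
qed

lemma chain_dist_le:
  fixes p :: "nat \<Rightarrow> 'a::metric_space"
  assumes steps: "\<forall>j<n. dist (p j) (p (Suc j)) \<le> e"
  shows "i \<le> j \<Longrightarrow> j \<le> n \<Longrightarrow> dist (p i) (p j) \<le> real (j - i) * e"
proof (induction j)
  case (Suc j)
  show ?case
  proof (cases "i = Suc j")
    case False
    then have ij: "i \<le> j" using Suc.prems by simp
    have "dist (p i) (p (Suc j)) \<le> dist (p i) (p j) + dist (p j) (p (Suc j))" by (rule dist_triangle)
    also have "\<dots> \<le> real (j - i) * e + e" using Suc ij steps by (intro add_mono) auto
    also have "\<dots> = real (Suc j - i) * e" using ij by (simp add: Suc_diff_le algebra_simps)
    finally show ?thesis .
  qed simp
qed simp

lemma real_div_nat_bounds: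
  fixes a N :: nat
  assumes "N > 0"
  shows "real (a div N) \<le> real a / real N" "real a / real N - 1 < real (a div N)"
proof -
  have "real a / real N = real (a div N) + real (a mod N) / real N"
    using assms by (simp add: field_simps flip: of_nat_mult of_nat_add)
  moreover have "real (a mod N) / real N < 1" using assms by simp
  ultimately show "real (a div N) \<le> real a / real N" "real a / real N - 1 < real (a div N)"
    by (simp_all add: add_less_cancel_left)
qed

text \<open>A chain of length \<open>N\<close> is sampled from a dyadic chain of length \<open>2^(N L) \<ge> N L\<close>;
  rounding the indices costs the factor \<open>1 + 1/L\<close>.\<close>

lemma NPC_chain:
  fixes x c :: "'a::metric_space"
  assumes npc: "NPC_space TYPE('a)" and N: "N \<ge> 1" and L: "L \<ge> (1::nat)"
  shows "\<exists>p. p 0 = x \<and> p N = c \<and> (\<forall>i<N. dist (p i) (p (Suc i)) \<le> dist x c / N * (1 + 1 / L))"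
proof -
  define k where "k = N * L"
  have k: "real (N * L) \<le> 2 ^ k"
    unfolding k_def by (metis less_exp less_imp_le of_nat_le_iff of_nat_numeral of_nat_power)
  obtain P where P: "P 0 = x" "P (2 ^ k) = c" "\<forall>j<2 ^ k. dist (P j) (P (Suc j)) \<le> dist x c / 2 ^ k"
    using NPC_dyadic_chain[OF npc, of x k c] by blast
  define p where "p i = P (i * 2 ^ k div N)" for i
  have "dist (p i) (p (Suc i)) \<le> dist x c / N * (1 + 1 / L)" if i: "i < N" for i
  proof -
    define u where "u = i * 2 ^ k div N"
    define v where "v = Suc i * 2 ^ k div N"
    have uv: "u \<le> v" unfolding u_def v_def by (intro div_le_mono mult_le_mono) auto
    have "v \<le> N * 2 ^ k div N" unfolding v_def using i by (intro div_le_mono mult_le_mono) auto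
    then have v: "v \<le> 2 ^ k" using N by simp
    have "real (v - u) \<le> real (2 ^ k) / N + 1"
      using real_div_nat_bounds(1)[of N "Suc i * 2 ^ k"] real_div_nat_bounds(2)[of N "i * 2 ^ k"] uv N
      by (simp add: u_def v_def of_nat_diff add_divide_distrib)
    then have "real (v - u) * (dist x c / 2 ^ k) \<le> (real (2 ^ k) / N + 1) * (dist x c / 2 ^ k)"
      by (intro mult_right_mono) auto
    also have "\<dots> = dist x c / N + dist x c / 2 ^ k" by (simp add: field_simps)
    also have "dist x c / 2 ^ k \<le> dist x c / (N * L)"
      using k N L by (intro divide_left_mono) auto
    also have "dist x c / N + dist x c / (N * L) = dist x c / N * (1 + 1 / L)"
      using N L by (simp add: field_simps)
    finally show ?thesis
      using chain_dist_le[OF P(3) uv v] unfolding p_def u_def v_def by simp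
  qed
  moreover have "p 0 = x" "p N = c" using P N unfolding p_def by simp_all
  ultimately show ?thesis by blast
qed

lemma NPC_quadruple_sq_le_chains:
  fixes x c y z :: "'a::metric_space" and N M :: nat
  assumes npc: "NPC_space TYPE('a)" and N: "N \<ge> 1" and M: "M \<ge> (1::nat)"
  shows "quadruple (\<lambda>u v. (dist u v)\<^sup>2) x c y z
     \<le> (1 + 1 / M)\<^sup>2 * (M * (dist x c)\<^sup>2 / N + N * (dist y z)\<^sup>2 / M)"
proof -
  define A where "A = dist x c / N * (1 + 1 / M)"
  define B where "B = dist y z / M * (1 + 1 / M)"
  obtain p where p: "p 0 = x" "p N = c" "\<forall>i<N. dist (p i) (p (Suc i)) \<le> A"
    using NPC_chain[OF npc N M, of x c] unfolding A_def by blast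
  obtain q where q: "q 0 = y" "q M = z" "\<forall>j<M. dist (q j) (q (Suc j)) \<le> B"
    using NPC_chain[OF npc M M, of y z] unfolding B_def by blast
  have "quadruple (\<lambda>u v. (dist u v)\<^sup>2) x c y z
      = (\<Sum>i<N. \<Sum>j<M. quadruple (\<lambda>u v. (dist u v)\<^sup>2) (p i) (p (Suc i)) (q j) (q (Suc j)))"
    using quadruple_telescope[where N = N and M = M and p = p and q = q] p q by simp
  also have "\<dots> \<le> (\<Sum>i<N. \<Sum>j<M. A\<^sup>2 + B\<^sup>2)"
  proof (intro sum_mono)
    fix i j assume "i \<in> {..<N}" "j \<in> {..<M}"
    then have "(dist (p i) (p (Suc i)))\<^sup>2 + (dist (q j) (q (Suc j)))\<^sup>2 \<le> A\<^sup>2 + B\<^sup>2"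
      using p(3) q(3) by (intro add_mono power_mono) auto
    then show "quadruple (\<lambda>u v. (dist u v)\<^sup>2) (p i) (p (Suc i)) (q j) (q (Suc j)) \<le> A\<^sup>2 + B\<^sup>2"
      using NPC_quadruple_sq_le_sum_sq[OF npc] order_trans by blast
  qed
  also have "\<dots> = (1 + 1 / M)\<^sup>2 * (M * (dist x c)\<^sup>2 / N + N * (dist y z)\<^sup>2 / M)"
    using N M unfolding A_def B_def by (simp add: field_simps power2_eq_square)
  finally show ?thesis .
qed

lemma NPC_quadruple_sq_le_approx:
  fixes x c y z :: "'a::metric_space"
  assumes npc: "NPC_space TYPE('a)" and M: "M \<ge> (1::nat)"
    and t: "dist x c > 0" and s: "dist y z > 0"
  shows "quadruple (\<lambda>u v. (dist u v)\<^sup>2) x c y z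
     \<le> (1 + 1 / M)\<^sup>2 * (2 * dist x c * dist y z + (dist y z)\<^sup>2 / M)"
proof -
  define t where "t = dist x c"
  define s where "s = dist y z"
  have tp: "t > 0" and sp: "s > 0" and Mp: "real M > 0" using t s M t_def s_def by auto
  \<comment> \<open>the number of steps from \<open>x\<close> to \<open>c\<close> balancing the two terms of the chain bound\<close>
  define N where "N = nat \<lceil>M * t / s\<rceil>"
  have N_lower: "M * t / s \<le> real N" unfolding N_def by linarith
  have "real N = of_int \<lceil>M * t / s\<rceil>" unfolding N_def using tp sp Mp by simp
  then have N_upper: "real N < M * t / s + 1" using ceiling_correct[of "M * t / s"] by linarith
  have "0 < M * t / s" using tp sp Mp by simp
  then have Np: "real N > 0" using N_lower by linarith
  have "M * t\<^sup>2 / N \<le> t * s"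
    using N_lower Np tp sp by (simp add: field_simps power2_eq_square mult_right_mono)
  moreover have "N * s\<^sup>2 / M \<le> t * s + s\<^sup>2 / M"
  proof -
    have "N * s \<le> M * t + s" using N_upper sp by (simp add: field_simps)
    then have "N * s * s \<le> (M * t + s) * s" using sp by (intro mult_right_mono) auto
    then show ?thesis using Mp by (simp add: field_simps power2_eq_square)
  qed
  ultimately have "M * t\<^sup>2 / N + N * s\<^sup>2 / M \<le> 2 * t * s + s\<^sup>2 / M" by simp
  then have "(1 + 1 / M)\<^sup>2 * (M * t\<^sup>2 / N + N * s\<^sup>2 / M) \<le> (1 + 1 / M)\<^sup>2 * (2 * t * s + s\<^sup>2 / M)"
    by (rule mult_left_mono) simp
  moreover have "quadruple (\<lambda>u v. (dist u v)\<^sup>2) x c y z \<le> (1 + 1 / M)\<^sup>2 * (M * t\<^sup>2 / N + N * s\<^sup>2 / M)"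
    using NPC_quadruple_sq_le_chains[OF npc _ M, of N] Np unfolding t_def s_def by simp
  ultimately show ?thesis unfolding t_def s_def by linarith
qed

lemma NPC_quadruple_sq_le:
  fixes x c y z :: "'a::metric_space"
  assumes npc: "NPC_space TYPE('a)"
  shows "quadruple (\<lambda>u v. (dist u v)\<^sup>2) x c y z \<le> 2 * dist x c * dist y z"
proof (cases "dist x c = 0 \<or> dist y z = 0")
  case True
  then show ?thesis unfolding quadruple_def by auto
next
  case False
  then have t: "dist x c > 0" and s: "dist y z > 0" by auto
  define f where "f n = (1 + inverse (real (Suc n)))\<^sup>2
      * (2 * dist x c * dist y z + (dist y z)\<^sup>2 * inverse (real (Suc n)))" for n
  have "f \<longlonglongrightarrow> (1 + 0)\<^sup>2 * (2 * dist x c * dist y z + (dist y z)\<^sup>2 * 0)"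
    unfolding f_def by (intro tendsto_intros LIMSEQ_inverse_real_of_nat)
  then have "f \<longlonglongrightarrow> 2 * dist x c * dist y z" by simp
  moreover have "quadruple (\<lambda>u v. (dist u v)\<^sup>2) x c y z \<le> f n" for n
    using NPC_quadruple_sq_le_approx[OF npc _ t s, of "Suc n"] unfolding f_def by (simp add: divide_inverse)
  ultimately show ?thesis by (intro LIMSEQ_le_const) auto
qed

lemma NPC_quadruple_powr_le_local:
  fixes x c y z :: "'a::metric_space"
  assumes npc: "NPC_space TYPE('a)" and g: "0 < g" "g \<le> 1"
  shows "quadruple (\<lambda>u v. dist u v powr (1 + g)) x c y z
     \<le> (1 + g) * 2 powr (1 - g) * dist x c powr g * dist y z + 3 * (1 + g) * dist y z powr g * dist y z"
proof -
  have "\<bar>dist x y - dist x z\<bar> \<le> dist y z" "\<bar>dist c y - dist c z\<bar> \<le> dist y z"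
    using abs_dist_diff_le[of y x z] abs_dist_diff_le[of y c z] by (simp_all add: dist_commute)
  moreover have "\<bar>dist x y - dist c y\<bar> \<le> dist x c" using abs_dist_diff_le[of x y c] by (simp add: dist_commute)
  moreover have "(dist x y)\<^sup>2 - (dist c y)\<^sup>2 - (dist x z)\<^sup>2 + (dist c z)\<^sup>2 \<le> 2 * dist x c * dist y z"
    using NPC_quadruple_sq_le[OF npc, of x c y z] unfolding quadruple_def .
  ultimately show ?thesis unfolding quadruple_def by (intro powr_quadruple_step_le[OF g]) auto
qed

text \<open>After subdividing \<open>y z\<close> dyadically, the error terms of the local bound add up to
  \<open>2^k (s/2^k)^(1+g)\<close>, which vanishes as \<open>k \<rightarrow> \<infinity>\<close>.\<close>

lemma NPC_quadruple_powr_le: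
  fixes x c y z :: "'a::metric_space"
  assumes npc: "NPC_space TYPE('a)" and g: "0 < g" "g \<le> 1"
  shows "quadruple (\<lambda>u v. dist u v powr (1 + g)) x c y z
     \<le> (1 + g) * 2 powr (1 - g) * dist x c powr g * dist y z"
proof -
  define \<eta> where "\<eta> u v = dist u v powr (1 + g)" for u v :: 'a
  define L where "L = (1 + g) * 2 powr (1 - g) * dist x c powr g"
  define s where "s = dist y z"
  define f where "f k = L * s + 3 * (1 + g) * s powr g * s * inverse (2 powr g) ^ k" for k :: nat
  have "inverse (2 powr g) < (1::real)" using g by (simp add: inverse_less_1_iff)
  then have "f \<longlonglongrightarrow> L * s + 3 * (1 + g) * s powr g * s * 0"
    unfolding f_def using g by (intro tendsto_intros) simp
  then have lim: "f \<longlonglongrightarrow> L * s" by simp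
  have "quadruple \<eta> x c y z \<le> f k" for k
  proof -
    obtain q where q: "q 0 = y" "q (2 ^ k) = z" "\<forall>j<2 ^ k. dist (q j) (q (Suc j)) \<le> s / 2 ^ k"
      using NPC_dyadic_chain[OF npc, of y k z] unfolding s_def by blast
    define e where "e = s / 2 ^ k"
    have "quadruple \<eta> x c y z = (\<Sum>j<2 ^ k. quadruple \<eta> x c (q j) (q (Suc j)))"
      using quadruple_telescope_right[where M = "2 ^ k" and q = q] q by simp
    also have "\<dots> \<le> (\<Sum>j<(2::nat) ^ k. L * e + 3 * (1 + g) * e powr g * e)"
    proof (intro sum_mono)
      fix j assume "j \<in> {..<(2::nat) ^ k}"
      then have d: "dist (q j) (q (Suc j)) \<le> e" using q(3) unfolding e_def by auto
      have "quadruple \<eta> x c (q j) (q (Suc j))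
          \<le> L * dist (q j) (q (Suc j)) + 3 * (1 + g) * dist (q j) (q (Suc j)) powr g * dist (q j) (q (Suc j))"
        using NPC_quadruple_powr_le_local[OF npc g] unfolding \<eta>_def L_def .
      also have "\<dots> \<le> L * e + 3 * (1 + g) * e powr g * e"
        using d g unfolding L_def by (intro add_mono mult_left_mono mult_mono powr_mono2) auto
      finally show "quadruple \<eta> x c (q j) (q (Suc j)) \<le> L * e + 3 * (1 + g) * e powr g * e" .
    qed
    also have "\<dots> = f k"
    proof -
      have "((2::real) ^ k) powr g = (2 powr g) ^ k"
        by (simp add: powr_realpow[symmetric] powr_powr powr_power mult.commute)
      then have "e powr g = s powr g / (2 powr g) ^ k"
        unfolding e_def s_def by (simp add: powr_divide)
      then have "e powr g = s powr g * inverse (2 powr g) ^ k" by (simp add: divide_inverse power_inverse)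
      then show ?thesis unfolding f_def e_def by (simp add: field_simps)
    qed
    finally show ?thesis .
  qed
  then have "quadruple \<eta> x c y z \<le> L * s" by (intro LIMSEQ_le_const[OF lim]) auto
  then show ?thesis unfolding \<eta>_def L_def s_def .
qed

lemma emp_dist_le:
  assumes "\<And>y. \<bar>f y - h y\<bar> \<le> \<tau> * G y" "0 \<le> \<tau>"
  shows "emp_dist n x f h \<le> \<tau> * emp_norm n x G"
proof -
  have "(f (x i) - h (x i))\<^sup>2 \<le> (\<tau> * G (x i))\<^sup>2" for i
    using power_mono[OF assms(1)[of "x i"] abs_ge_zero, of 2] by simp
  then have "emp_dist n x f h \<le> sqrt (1 / real n * (\<Sum>i=1..n. (\<tau> * G (x i))\<^sup>2))"
    unfolding emp_dist_def emp_norm_def by (intro real_sqrt_le_mono mult_left_mono sum_mono) auto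
  also have "1 / real n * (\<Sum>i=1..n. (\<tau> * G (x i))\<^sup>2) = \<tau>\<^sup>2 * (1 / real n * (\<Sum>i=1..n. (G (x i))\<^sup>2))"
    by (simp add: power_mult_distrib sum_distrib_left)
  also have "sqrt \<dots> = \<tau> * emp_norm n x G"
    unfolding emp_norm_def using assms(2) by (subst real_sqrt_mult) simp
  finally show ?thesis .
qed

lemma covering_number_image_le:
  assumes "S \<subseteq> T" and close: "\<And>c x. \<rho> c x \<le> r \<Longrightarrow> \<rho>' (f c) (f x) \<le> r'"
  shows "covering_number r' (f ` S) \<rho>' \<le> covering_number r T \<rho>"
  unfolding covering_number_def
proof (rule Inf_mono)
  fix b assume "b \<in> (\<lambda>C. ereal (card C)) ` {C. finite C \<and> T \<subseteq> (\<Union>c\<in>C. {x. \<rho> c x \<le> r})}"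
  then obtain C where C: "finite C" "T \<subseteq> (\<Union>c\<in>C. {x. \<rho> c x \<le> r})" and b: "b = ereal (card C)"
    by blast
  have "f ` S \<subseteq> (\<Union>c\<in>f ` C. {x. \<rho>' c x \<le> r'})" using assms C(2) by fastforce
  moreover have "card (f ` C) \<le> card C" by (rule card_image_le[OF C(1)])
  ultimately show "\<exists>a\<in>(\<lambda>C. ereal (card C)) ` {C. finite C \<and> f ` S \<subseteq> (\<Union>c\<in>C. {x. \<rho>' c x \<le> r'})}. a \<le> b"
    using C(1) b by (intro bexI[of _ "ereal (card (f ` C))"]) auto
qed

lemma integrable_dist_powr:
  fixes M :: "'a::metric_space measure"
  assumes "finite_measure M" and sets_M: "sets M = sets borel"
    and moment: "integrable M (\<lambda>y. (dist z y)\<^sup>2)" and a: "0 \<le> a" "a \<le> 2"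
  shows "integrable M (\<lambda>y. dist x y powr a)"
proof (rule Bochner_Integration.integrable_bound)
  show "integrable M (\<lambda>y. 1 + (2 * (dist x z)\<^sup>2 + 2 * (dist z y)\<^sup>2))"
    using moment \<open>finite_measure M\<close>
    by (intro Bochner_Integration.integrable_add integrable_mult_right finite_measure.integrable_const)
  have "(\<lambda>y. dist x y) \<in> borel_measurable M"
    by (subst measurable_cong_sets[OF sets_M refl]) (intro borel_measurable_continuous_onI continuous_intros)
  then show "(\<lambda>y. dist x y powr a) \<in> borel_measurable M" by (intro powr_real_measurable) auto
  have powr_le: "dist x y powr a \<le> 1 + (dist x y)\<^sup>2" for y
  proof (cases "dist x y \<le> 1")
    case True
    then have "dist x y powr a \<le> 1" using a powr_mono2[of a "dist x y" 1] by simp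
    then show ?thesis using zero_le_power2[of "dist x y"] by linarith
  next
    case False
    then have "dist x y powr a \<le> dist x y powr 2" using a by (intro powr_mono) auto
    then show ?thesis by simp
  qed
  show "AE y in M. norm (dist x y powr a) \<le> norm (1 + (2 * (dist x z)\<^sup>2 + 2 * (dist z y)\<^sup>2))"
  proof (intro AE_I2)
    fix y
    have "dist x y powr a \<le> 1 + (2 * (dist x z)\<^sup>2 + 2 * (dist z y)\<^sup>2)"
      using powr_le[of y] power2_dist_triangle[of x y z] by linarith
    then show "norm (dist x y powr a) \<le> norm (1 + (2 * (dist x z)\<^sup>2 + 2 * (dist z y)\<^sup>2))" by simp
  qed
qed

lemma f_eta_dist_powr_diff_le:
  fixes M :: "'a::metric_space measure"
  assumes npc: "NPC_space TYPE('a)" and "prob_space M" and g: "0 < g" "g \<le> 1"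
    and int_\<eta>: "\<And>w. integrable M (\<lambda>z. dist w z powr (1 + g))"
    and int_dist: "integrable M (\<lambda>z. dist y z)"
  shows "\<bar>f_eta M (\<lambda>u v. dist u v powr (1 + g)) xs c y - f_eta M (\<lambda>u v. dist u v powr (1 + g)) xs x y\<bar>
         \<le> (1 + g) * 2 powr (1 - g) * dist c x powr g * (LINT z|M. dist y z)"
proof -
  interpret prob_space M by fact
  define \<eta> where "\<eta> u v = dist u v powr (1 + g)" for u v :: 'a
  define B where "B = (1 + g) * 2 powr (1 - g) * dist c x powr g"
  have int_Q: "integrable M (quadruple \<eta> c x y)"
    unfolding quadruple_def \<eta>_def using int_\<eta> by simp
  have "f_eta M \<eta> xs c y - f_eta M \<eta> xs x y = (LINT z|M. quadruple \<eta> c x y z)"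
    unfolding f_eta_def eta_c_def quadruple_def \<eta>_def using int_\<eta> by (simp add: prob_space)
  also have "\<bar>\<dots>\<bar> \<le> (LINT z|M. \<bar>quadruple \<eta> c x y z\<bar>)" by (rule integral_abs_bound)
  also have "\<dots> \<le> (LINT z|M. B * dist y z)"
  proof (intro integral_mono)
    fix z
    have "quadruple \<eta> c x y z \<le> B * dist y z" "quadruple \<eta> c x z y \<le> B * dist z y"
      using NPC_quadruple_powr_le[OF npc g] unfolding \<eta>_def B_def by blast+
    moreover have "quadruple \<eta> c x z y = - quadruple \<eta> c x y z" unfolding quadruple_def by simp
    ultimately show "\<bar>quadruple \<eta> c x y z\<bar> \<le> B * dist y z" by (simp add: dist_commute)
  qed (use int_Q int_dist in auto)
  finally show ?thesis unfolding \<eta>_def B_def by simp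
qed

lemma M_eta_subset_cball:
  fixes xs :: "'a::metric_space"
  assumes int_\<eta>: "\<And>x. integrable P (\<eta> x)"
    and minimizer: "\<forall>x. (LINT y|P. \<eta> xs y) \<le> (LINT y|P. \<eta> x y)"
    and growth: "\<forall>x. (c * dist x xs powr g)\<^sup>2 \<le> K * (LINT y|P. \<eta> x y - \<eta> xs y) powr \<beta>"
    and "0 < c" "0 < g" "0 \<le> K" "0 \<le> \<beta>"
  shows "M_eta P \<eta> xs \<delta> \<subseteq> cball xs ((sqrt (K * \<delta> powr \<beta>) / c) powr (1 / g))"
proof
  fix x assume "x \<in> M_eta P \<eta> xs \<delta>"
  then have excess: "(LINT y|P. \<eta> x y - \<eta> xs y) \<le> \<delta>" unfolding M_eta_def by simp
  have "(LINT y|P. \<eta> x y - \<eta> xs y) = (LINT y|P. \<eta> x y) - (LINT y|P. \<eta> xs y)"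
    using int_\<eta> by simp
  then have "0 \<le> (LINT y|P. \<eta> x y - \<eta> xs y)" using minimizer by simp
  then have "(c * dist x xs powr g)\<^sup>2 \<le> K * \<delta> powr \<beta>"
    using growth excess assms(4-) by (meson mult_left_mono order_trans powr_mono2)
  then have "dist x xs powr g \<le> sqrt (K * \<delta> powr \<beta>) / c"
    using \<open>0 < c\<close> by (simp add: real_le_rsqrt pos_le_divide_eq mult.commute)
  then have "(dist x xs powr g) powr (1 / g) \<le> (sqrt (K * \<delta> powr \<beta>) / c) powr (1 / g)"
    using \<open>0 < g\<close> by (intro powr_mono2) auto
  then show "x \<in> cball xs ((sqrt (K * \<delta> powr \<beta>) / c) powr (1 / g))"
    using \<open>0 < g\<close> by (simp add: powr_powr dist_commute)
qed

lemma covering_number_F_eta_dist_powr_le: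
  fixes P :: "'a::metric_space measure"
  assumes npc: "NPC_space TYPE('a)" and prob: "prob_space P" and sets_P: "sets P = sets borel"
    and moment: "integrable P (\<lambda>y. (dist z y)\<^sup>2)" and g: "0 < g" "g \<le> 1"
    and sub: "M_eta P (\<lambda>u v. dist u v powr (1 + g)) xs \<delta> \<subseteq> T"
    and envelope: "\<And>y. (1 + g) * 2 powr (1 - g) * \<rho> powr g * (LINT z|P. dist y z) \<le> \<tau> * H y"
    and "0 \<le> \<tau>"
  shows "covering_number (\<tau> * emp_norm n x H) (F_eta P (\<lambda>u v. dist u v powr (1 + g)) xs \<delta>) (emp_dist n x)
     \<le> covering_number \<rho> T dist"
proof -
  define \<eta> where "\<eta> u v = dist u v powr (1 + g)" for u v :: 'a
  have int_powr: "integrable P (\<lambda>v. dist u v powr a)" if "0 \<le> a" "a \<le> 2" for u a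
    using integrable_dist_powr[OF prob_space.finite_measure[OF prob] sets_P moment that] .
  have "emp_dist n x (f_eta P \<eta> xs u) (f_eta P \<eta> xs v) \<le> \<tau> * emp_norm n x H" if "dist u v \<le> \<rho>" for u v
  proof (rule emp_dist_le[OF _ \<open>0 \<le> \<tau>\<close>])
    fix y
    have "\<bar>f_eta P \<eta> xs u y - f_eta P \<eta> xs v y\<bar>
        \<le> (1 + g) * 2 powr (1 - g) * dist u v powr g * (LINT z|P. dist y z)"
      using f_eta_dist_powr_diff_le[OF npc prob g] int_powr[of "1 + g"] int_powr[of 1] g
      unfolding \<eta>_def by simp
    also have "\<dots> \<le> (1 + g) * 2 powr (1 - g) * \<rho> powr g * (LINT z|P. dist y z)"
      using that g
      by (intro mult_right_mono mult_left_mono powr_mono2) (auto simp: Bochner_Integration.integral_nonneg)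
    also have "\<dots> \<le> \<tau> * H y" by (rule envelope)
    finally show "\<bar>f_eta P \<eta> xs u y - f_eta P \<eta> xs v y\<bar> \<le> \<tau> * H y" .
  qed
  then show ?thesis
    using sub unfolding F_eta_def \<eta>_def[symmetric] by (intro covering_number_image_le)
qed

theorem proposition4p3:
  fixes P :: "'a::polish_space measure"
    and \<Omega> :: "'w measure"
    and X :: "nat \<Rightarrow> 'w \<Rightarrow> 'a"
    and xs :: 'a
    and \<alpha> K A1 D1 :: real
  defines "\<eta> \<equiv> (\<lambda>x y. dist x y powr \<alpha>)"
  defines "\<beta> \<equiv> 2 - 2 / \<alpha>"
  assumes npc: "NPC_space TYPE('a)"
    and prob: "prob_space P" and sets_P: "sets P = sets borel"
    and second_moment: "\<exists>z. integrable P (\<lambda>y. (dist z y)\<^sup>2)"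
    and minimizer: "\<forall>x. (LINT y|P. \<eta> xs y) \<le> (LINT y|P. \<eta> x y)"
    and sample_prob: "prob_space \<Omega>"
    and sample_meas: "\<forall>i. X i \<in> measurable \<Omega> borel"
    and sample_indep: "prob_space.indep_vars \<Omega> (\<lambda>_. borel) X UNIV"
    and sample_law: "\<forall>i. distr \<Omega> borel (X i) = P"
    and alpha: "1 < \<alpha>" "\<alpha> \<le> 2"
    and K_pos: "K > 0"
    and A2: "\<forall>x. (\<alpha> * 2 powr (1 - \<alpha>) * dist x xs powr (\<alpha> - 1))\<^sup>2
               \<le> K * (LINT y|P. \<eta> x y - \<eta> xs y) powr \<beta>"
    and A1_pos: "A1 > 0" and D1_pos: "D1 > 0"
    and B1': "\<forall>r>0. \<forall>\<tau>. 0 < \<tau> \<and> \<tau> \<le> r \<longrightarrow>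
               covering_number \<tau> (cball xs r) dist \<le> ereal ((A1 * r / \<tau>) powr D1)"
  shows "\<forall>\<delta>>0. \<forall>n\<ge>1. \<forall>\<tau>. 0 < \<tau> \<and> \<tau> \<le> 1 \<longrightarrow> (\<forall>\<omega>\<in>space \<Omega>.
           covering_number (\<tau> * emp_norm n (\<lambda>i. X i \<omega>) (H_eta P K \<beta> \<delta>))
              (F_eta P \<eta> xs \<delta>) (emp_dist n (\<lambda>i. X i \<omega>))
           \<le> ereal ((A1 / \<tau> powr (1 / (\<alpha> - 1))) powr D1))"
proof (intro allI impI ballI)
  fix \<delta> \<tau> :: real and n :: nat and \<omega>
  assume \<delta>: "\<delta> > 0" and \<tau>: "0 < \<tau> \<and> \<tau> \<le> 1"
  define g where "g = \<alpha> - 1"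
  define S where "S = sqrt (K * \<delta> powr \<beta>)"
  define c where "c = \<alpha> * 2 powr (1 - \<alpha>)"
  define R where "R = (S / c) powr (1 / g)"
  define \<rho> where "\<rho> = R * \<tau> powr (1 / g)"
  have g: "0 < g" "g \<le> 1" and \<eta>_eq: "\<eta> = (\<lambda>u v. dist u v powr (1 + g))"
    using alpha unfolding g_def \<eta>_def by auto
  have pos: "0 < S" "0 < c" "0 < R" "0 < \<rho>" "0 \<le> \<beta>"
    using K_pos \<delta> \<tau> alpha unfolding S_def c_def R_def \<rho>_def \<beta>_def by (auto simp: field_simps)
  obtain z where moment: "integrable P (\<lambda>y. (dist z y)\<^sup>2)" using second_moment by blast
  have "integrable P (\<eta> x)" for x
    using integrable_dist_powr[OF prob_space.finite_measure[OF prob] sets_P moment] alpha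
    unfolding \<eta>_def by simp
  then have sub: "M_eta P \<eta> xs \<delta> \<subseteq> cball xs R"
    using M_eta_subset_cball[OF _ minimizer A2[folded c_def g_def] pos(2) g(1) _ pos(5)] K_pos
    unfolding R_def S_def by simp
  have "(1 + g) * 2 powr (1 - g) * \<rho> powr g = \<tau> * (2 * S)"
  proof -
    have "\<rho> powr g = S / c * \<tau>"
      unfolding \<rho>_def R_def using pos g \<tau> by (simp add: powr_mult[symmetric] powr_powr)
    moreover have "2 powr (1 - g) = 2 * 2 powr (1 - \<alpha>)"
      unfolding g_def using powr_add[of 2 1 "1 - \<alpha>"] by simp
    ultimately show ?thesis using alpha unfolding c_def g_def by (simp add: field_simps)
  qed
  then have envelope: "(1 + g) * 2 powr (1 - g) * \<rho> powr g * (LINT z|P. dist y z) \<le> \<tau> * H_eta P K \<beta> \<delta> y" for y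
    unfolding H_eta_def S_def by simp
  have "covering_number (\<tau> * emp_norm n (\<lambda>i. X i \<omega>) (H_eta P K \<beta> \<delta>)) (F_eta P \<eta> xs \<delta>)
      (emp_dist n (\<lambda>i. X i \<omega>)) \<le> covering_number \<rho> (cball xs R) dist"
    using covering_number_F_eta_dist_powr_le[OF npc prob sets_P moment g sub[unfolded \<eta>_eq] envelope] \<tau>
    unfolding \<eta>_eq by simp
  also have "\<dots> \<le> ereal ((A1 * R / \<rho>) powr D1)"
  proof -
    have "\<rho> \<le> R" unfolding \<rho>_def using pos(3) \<tau> g powr_mono2[of "1 / g" \<tau> 1] by (simp add: mult_left_le)
    then show ?thesis using B1' pos(3,4) by blast
  qed
  also have "A1 * R / \<rho> = A1 / \<tau> powr (1 / (\<alpha> - 1))"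
    using pos unfolding \<rho>_def g_def by simp
  finally show "covering_number (\<tau> * emp_norm n (\<lambda>i. X i \<omega>) (H_eta P K \<beta> \<delta>)) (F_eta P \<eta> xs \<delta>)
      (emp_dist n (\<lambda>i. X i \<omega>)) \<le> ereal ((A1 / \<tau> powr (1 / (\<alpha> - 1))) powr D1)" .
qed

end
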